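(* Let $A$ be a category with a variance $(E,M)$ and let $C$ be a category. For every functor $F\colon A\rightarrow C$ of variance $(E,M)$, the restriction $F|_E$ is a covariant functor $E\rightarrow C$, the restriction $F|_M$ is a contravariant functor $M\rightarrow C$, and $(F|_E,F|_M)$ is a compatible pair. Moreover, the assignment $F\mapsto (F|_E,F|_M)$ is a bijection from the functors $A\rightarrow C$ of variance $(E,M)$ onto the compatible pairs $(G\colon E\rightarrow C,\ H\colon M\rightarrow C)$.
   Context: A strict factorization system on a category $A$ is a pair $(E,M)$ of subcategories of $A$, both containing all objects of $A$, such that every morphism $f$ of $A$ factors uniquely as $f=me$ with $e$ in $E$ and $m$ in $M$. A variance on $A$ is a pair $(E,M)$ such that both $(E,M)$ and $(M,E)$ are strict factorization systems. For $f\colon x\rightarrow y$ in $A$ write $f=f^m f^e$ with $f^e\colon x\rightarrow f_t$ in $E$, $f^m\colon f_t\rightarrow y$ in $M$, and $f=f_e f_m$ with $f_m\colon x\rightarrow f_s$ in $M$, $f_e\colon f_s\rightarrow y$ in $E$. (For $f$ in $E$: $f_s=x$, $f_t=y$; for $f$ in $M$: $f_s=y$, $f_t=x$.) A functor $F\colon A\rightarrow C$ of variance $(E,M)$ consists of a function $F$ on objects and a function $F$ on morphisms such that: $F$ sends identities to identities; for every morphism $f$ of $A$, $F(f)$ is a morphism $F(f_s)\rightarrow F(f_t)$; and for all composable morphisms $x\xrightarrow{f}y\xrightarrow{g}z$ of $A$, $$F(gf)=F((g^ef^m)^e)\,F(f)\,F((g_mf_e)_m)\quad\text{and}\quad F(gf)=F((g^ef^m)^m)\,F(g)\,F((g_mf_e)_e).$$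 A compatible pair consists of a covariant functor $G\colon E\rightarrow C$ and a contravariant functor $H\colon M\rightarrow C$ which agree on objects and satisfy $G(f^e)H(f_m)=H(f^m)G(f_e)$ for every morphism $f$ of $A$. *)

theory Defs
  imports Main "HOL-Library.FuncSet"
begin

text \<open>Categories, given explicitly by objects, morphisms, domain, codomain,
identities and composition.  Comp A g f denotes g after f (defined when Cod f = Dom g).\<close>

record ('o, 'm) cat =
  Obj  :: "'o set"
  Mor  :: "'m set"
  Dom  :: "'m \<Rightarrow> 'o"
  Cod  :: "'m \<Rightarrow> 'o"
  Idm  :: "'o \<Rightarrow> 'm"
  Comp :: "'m \<Rightarrow> 'm \<Rightarrow> 'm"

definition is_category :: "('o, 'm) cat \<Rightarrow> bool" where
  "is_category A \<longleftrightarrow>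
     (\<forall>f\<in>Mor A. Dom A f \<in> Obj A \<and> Cod A f \<in> Obj A) \<and>
     (\<forall>x\<in>Obj A. Idm A x \<in> Mor A \<and> Dom A (Idm A x) = x \<and> Cod A (Idm A x) = x) \<and>
     (\<forall>f\<in>Mor A. \<forall>g\<in>Mor A. Cod A f = Dom A g \<longrightarrow>
        Comp A g f \<in> Mor A \<and> Dom A (Comp A g f) = Dom A f \<and> Cod A (Comp A g f) = Cod A g) \<and>
     (\<forall>f\<in>Mor A. Comp A f (Idm A (Dom A f)) = f \<and> Comp A (Idm A (Cod A f)) f = f) \<and>
     (\<forall>f\<in>Mor A. \<forall>g\<in>Mor A. \<forall>h\<in>Mor A. Cod A f = Dom A g \<longrightarrow> Cod A g = Dom A h \<longrightarrow>
        Comp A h (Comp A g f) = Comp A (Comp A h g) f)"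

definition wide_subcat :: "('o, 'm) cat \<Rightarrow> 'm set \<Rightarrow> bool" where
  "wide_subcat A S \<longleftrightarrow> S \<subseteq> Mor A \<and> (\<forall>x\<in>Obj A. Idm A x \<in> S) \<and>
     (\<forall>f\<in>S. \<forall>g\<in>S. Cod A f = Dom A g \<longrightarrow> Comp A g f \<in> S)"

definition is_fact :: "('o, 'm) cat \<Rightarrow> 'm set \<Rightarrow> 'm set \<Rightarrow> 'm \<Rightarrow> 'm \<Rightarrow> 'm \<Rightarrow> bool" where
  "is_fact A X Y f e m \<longleftrightarrow> e \<in> X \<and> m \<in> Y \<and> Cod A e = Dom A m \<and> Comp A m e = f"

definition strict_fact_system :: "('o, 'm) cat \<Rightarrow> 'm set \<Rightarrow> 'm set \<Rightarrow> bool" where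
  "strict_fact_system A X Y \<longleftrightarrow> wide_subcat A X \<and> wide_subcat A Y \<and>
     (\<forall>f\<in>Mor A. \<exists>!p. is_fact A X Y f (fst p) (snd p))"

definition variance :: "('o, 'm) cat \<Rightarrow> 'm set \<Rightarrow> 'm set \<Rightarrow> bool" where
  "variance A E M \<longleftrightarrow> strict_fact_system A E M \<and> strict_fact_system A M E"

definition fst_fac :: "('o, 'm) cat \<Rightarrow> 'm set \<Rightarrow> 'm set \<Rightarrow> 'm \<Rightarrow> 'm" where
  "fst_fac A X Y f = fst (THE p. is_fact A X Y f (fst p) (snd p))"

definition snd_fac :: "('o, 'm) cat \<Rightarrow> 'm set \<Rightarrow> 'm set \<Rightarrow> 'm \<Rightarrow> 'm" where
  "snd_fac A X Y f = snd (THE p. is_fact A X Y f (fst p) (snd p))"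

text \<open>Notation of the paper: f = f^m f^e (E,M) and f = f_e f_m (M,E).\<close>
definition up_e :: "('o, 'm) cat \<Rightarrow> 'm set \<Rightarrow> 'm set \<Rightarrow> 'm \<Rightarrow> 'm" where
  "up_e A E M f = fst_fac A E M f"
definition up_m :: "('o, 'm) cat \<Rightarrow> 'm set \<Rightarrow> 'm set \<Rightarrow> 'm \<Rightarrow> 'm" where
  "up_m A E M f = snd_fac A E M f"
definition lo_m :: "('o, 'm) cat \<Rightarrow> 'm set \<Rightarrow> 'm set \<Rightarrow> 'm \<Rightarrow> 'm" where
  "lo_m A E M f = fst_fac A M E f"
definition lo_e :: "('o, 'm) cat \<Rightarrow> 'm set \<Rightarrow> 'm set \<Rightarrow> 'm \<Rightarrow> 'm" where
  "lo_e A E M f = snd_fac A M E f"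

definition f_t :: "('o, 'm) cat \<Rightarrow> 'm set \<Rightarrow> 'm set \<Rightarrow> 'm \<Rightarrow> 'o" where
  "f_t A E M f = Cod A (up_e A E M f)"
definition f_s :: "('o, 'm) cat \<Rightarrow> 'm set \<Rightarrow> 'm set \<Rightarrow> 'm \<Rightarrow> 'o" where
  "f_s A E M f = Cod A (lo_m A E M f)"

definition var_functor ::
  "('o, 'm) cat \<Rightarrow> 'm set \<Rightarrow> 'm set \<Rightarrow> ('p, 'n) cat \<Rightarrow> ('o \<Rightarrow> 'p) \<Rightarrow> ('m \<Rightarrow> 'n) \<Rightarrow> bool" where
  "var_functor A E M C Fo Fm \<longleftrightarrow>
     (\<forall>x\<in>Obj A. Fo x \<in> Obj C) \<and>
     (\<forall>x\<in>Obj A. Fm (Idm A x) = Idm C (Fo x)) \<and>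
     (\<forall>f\<in>Mor A. Fm f \<in> Mor C \<and> Dom C (Fm f) = Fo (f_s A E M f) \<and> Cod C (Fm f) = Fo (f_t A E M f)) \<and>
     (\<forall>f\<in>Mor A. \<forall>g\<in>Mor A. Cod A f = Dom A g \<longrightarrow>
        Fm (Comp A g f) =
          Comp C (Fm (up_e A E M (Comp A (up_e A E M g) (up_m A E M f))))
            (Comp C (Fm f) (Fm (lo_m A E M (Comp A (lo_m A E M g) (lo_e A E M f))))) \<and>
        Fm (Comp A g f) =
          Comp C (Fm (up_m A E M (Comp A (up_e A E M g) (up_m A E M f))))
            (Comp C (Fm g) (Fm (lo_e A E M (Comp A (lo_m A E M g) (lo_e A E M f))))))"

definition cov_functor_on ::
  "('o, 'm) cat \<Rightarrow> 'm set \<Rightarrow> ('p, 'n) cat \<Rightarrow> ('o \<Rightarrow> 'p) \<Rightarrow> ('m \<Rightarrow> 'n) \<Rightarrow> bool" where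
  "cov_functor_on A S C Fo G \<longleftrightarrow>
     (\<forall>x\<in>Obj A. Fo x \<in> Obj C) \<and>
     (\<forall>x\<in>Obj A. G (Idm A x) = Idm C (Fo x)) \<and>
     (\<forall>f\<in>S. G f \<in> Mor C \<and> Dom C (G f) = Fo (Dom A f) \<and> Cod C (G f) = Fo (Cod A f)) \<and>
     (\<forall>f\<in>S. \<forall>g\<in>S. Cod A f = Dom A g \<longrightarrow> G (Comp A g f) = Comp C (G g) (G f))"

definition contra_functor_on ::
  "('o, 'm) cat \<Rightarrow> 'm set \<Rightarrow> ('p, 'n) cat \<Rightarrow> ('o \<Rightarrow> 'p) \<Rightarrow> ('m \<Rightarrow> 'n) \<Rightarrow> bool" where
  "contra_functor_on A S C Fo H \<longleftrightarrow>
     (\<forall>x\<in>Obj A. Fo x \<in> Obj C) \<and>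
     (\<forall>x\<in>Obj A. H (Idm A x) = Idm C (Fo x)) \<and>
     (\<forall>f\<in>S. H f \<in> Mor C \<and> Dom C (H f) = Fo (Cod A f) \<and> Cod C (H f) = Fo (Dom A f)) \<and>
     (\<forall>f\<in>S. \<forall>g\<in>S. Cod A f = Dom A g \<longrightarrow> H (Comp A g f) = Comp C (H f) (H g))"

definition compatible_pair ::
  "('o, 'm) cat \<Rightarrow> 'm set \<Rightarrow> 'm set \<Rightarrow> ('p, 'n) cat \<Rightarrow> ('o \<Rightarrow> 'p) \<Rightarrow> ('m \<Rightarrow> 'n) \<Rightarrow> ('m \<Rightarrow> 'n) \<Rightarrow> bool" where
  "compatible_pair A E M C Fo G H \<longleftrightarrow>
     cov_functor_on A E C Fo G \<and> contra_functor_on A M C Fo H \<and>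
     (\<forall>f\<in>Mor A. Comp C (G (up_e A E M f)) (H (lo_m A E M f)) =
                 Comp C (H (up_m A E M f)) (G (lo_e A E M f)))"

text \<open>Extensional representatives (functions determined by their values on the relevant domains).\<close>
definition var_functors ::
  "('o, 'm) cat \<Rightarrow> 'm set \<Rightarrow> 'm set \<Rightarrow> ('p, 'n) cat \<Rightarrow> (('o \<Rightarrow> 'p) \<times> ('m \<Rightarrow> 'n)) set" where
  "var_functors A E M C = {(Fo, Fm). var_functor A E M C Fo Fm \<and>
      Fo \<in> extensional (Obj A) \<and> Fm \<in> extensional (Mor A)}"

definition compatible_pairs ::
  "('o, 'm) cat \<Rightarrow> 'm set \<Rightarrow> 'm set \<Rightarrow> ('p, 'n) cat \<Rightarrow> (('o \<Rightarrow> 'p) \<times> ('m \<Rightarrow> 'n) \<times> ('m \<Rightarrow> 'n)) set" where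
  "compatible_pairs A E M C = {(Fo, G, H). compatible_pair A E M C Fo G H \<and>
      Fo \<in> extensional (Obj A) \<and> G \<in> extensional E \<and> H \<in> extensional M}"

definition restrict_pair ::
  "'m set \<Rightarrow> 'm set \<Rightarrow> ('o \<Rightarrow> 'p) \<times> ('m \<Rightarrow> 'n) \<Rightarrow> ('o \<Rightarrow> 'p) \<times> ('m \<Rightarrow> 'n) \<times> ('m \<Rightarrow> 'n)" where
  "restrict_pair E M F = (fst F, restrict (snd F) E, restrict (snd F) M)"

end

theory Submission
  imports Defs
begin

(* Restricting a functor F of variance (E,M) to E or to M yields a functor, because the
   factorizations of a morphism lying in E or in M are trivial, so the two composition laws
   collapse to ordinary (co- resp. contravariant) functoriality.  Applied to f = f_e f_m they
   give F f = F(f^e) F(f_m) = F(f^m) F(f_e): this is the compatibility of the restrictions and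
   shows that F is determined by them.  Conversely a compatible pair (G,H) glues to
   F f = G(f^e) H(f_m).  Its composition laws hold because factorizations of a composite are
   obtained by refactoring the middle: with k = g^e f^m one has (gf)^e = k^e f^e and
   (gf)^m = g^m k^m, and dually for the (M,E)-factorization. *)

locale category =
  fixes A :: "('o, 'm) cat"
  assumes is_category: "is_category A"
begin

lemma dom_in_Obj: "f \<in> Mor A \<Longrightarrow> Dom A f \<in> Obj A"
  and cod_in_Obj: "f \<in> Mor A \<Longrightarrow> Cod A f \<in> Obj A"
  and Idm_in_Mor: "x \<in> Obj A \<Longrightarrow> Idm A x \<in> Mor A"
  and dom_Idm [simp]: "x \<in> Obj A \<Longrightarrow> Dom A (Idm A x) = x"
  and cod_Idm [simp]: "x \<in> Obj A \<Longrightarrow> Cod A (Idm A x) = x"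
  and comp_in_Mor: "f \<in> Mor A \<Longrightarrow> g \<in> Mor A \<Longrightarrow> Cod A f = Dom A g \<Longrightarrow> Comp A g f \<in> Mor A"
  and dom_comp [simp]: "f \<in> Mor A \<Longrightarrow> g \<in> Mor A \<Longrightarrow> Cod A f = Dom A g \<Longrightarrow> Dom A (Comp A g f) = Dom A f"
  and cod_comp [simp]: "f \<in> Mor A \<Longrightarrow> g \<in> Mor A \<Longrightarrow> Cod A f = Dom A g \<Longrightarrow> Cod A (Comp A g f) = Cod A g"
  and comp_assoc: "f \<in> Mor A \<Longrightarrow> g \<in> Mor A \<Longrightarrow> h \<in> Mor A \<Longrightarrow> Cod A f = Dom A g \<Longrightarrow>
         Cod A g = Dom A h \<Longrightarrow> Comp A h (Comp A g f) = Comp A (Comp A h g) f"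
  using is_category unfolding is_category_def by blast+

lemma comp_Idm_right: "f \<in> Mor A \<Longrightarrow> Dom A f = x \<Longrightarrow> Comp A f (Idm A x) = f"
  and comp_Idm_left: "f \<in> Mor A \<Longrightarrow> Cod A f = x \<Longrightarrow> Comp A (Idm A x) f = f"
  using is_category unfolding is_category_def by blast+

lemma comp_Idm_Idm: "x \<in> Obj A \<Longrightarrow> Comp A (Idm A x) (Idm A x) = Idm A x"
  by (simp add: comp_Idm_right Idm_in_Mor)

lemma comp_assoc4:
  assumes "a \<in> Mor A" "b \<in> Mor A" "c \<in> Mor A" "d \<in> Mor A"
    and "Cod A a = Dom A b" "Cod A b = Dom A c" "Cod A c = Dom A d"
  shows "Comp A (Comp A d c) (Comp A b a) = Comp A d (Comp A (Comp A c b) a)"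
  using assms by (simp add: comp_assoc comp_in_Mor)

end

locale strict_factorization = category A for A :: "('o, 'm) cat" +
  fixes X Y :: "'m set"
  assumes strict_fact_system: "strict_fact_system A X Y"
begin

lemma X_Mor: "f \<in> X \<Longrightarrow> f \<in> Mor A"
  and Y_Mor: "f \<in> Y \<Longrightarrow> f \<in> Mor A"
  and Idm_in_X: "x \<in> Obj A \<Longrightarrow> Idm A x \<in> X"
  and Idm_in_Y: "x \<in> Obj A \<Longrightarrow> Idm A x \<in> Y"
  and X_comp_closed: "f \<in> X \<Longrightarrow> g \<in> X \<Longrightarrow> Cod A f = Dom A g \<Longrightarrow> Comp A g f \<in> X"
  and Y_comp_closed: "f \<in> Y \<Longrightarrow> g \<in> Y \<Longrightarrow> Cod A f = Dom A g \<Longrightarrow> Comp A g f \<in> Y"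
  using strict_fact_system unfolding strict_fact_system_def wide_subcat_def by blast+

lemma is_fact_fac:
  assumes "f \<in> Mor A"
  shows "is_fact A X Y f (fst_fac A X Y f) (snd_fac A X Y f)"
proof -
  have "\<exists>!p. is_fact A X Y f (fst p) (snd p)"
    using assms strict_fact_system unfolding strict_fact_system_def by blast
  then show ?thesis
    unfolding fst_fac_def snd_fac_def by (rule theI')
qed

lemma fst_fac_in_X: "f \<in> Mor A \<Longrightarrow> fst_fac A X Y f \<in> X"
  and snd_fac_in_Y: "f \<in> Mor A \<Longrightarrow> snd_fac A X Y f \<in> Y"
  and cod_fst_fac: "f \<in> Mor A \<Longrightarrow> Cod A (fst_fac A X Y f) = Dom A (snd_fac A X Y f)"
  and snd_fac_comp_fst_fac: "f \<in> Mor A \<Longrightarrow> Comp A (snd_fac A X Y f) (fst_fac A X Y f) = f"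
  using is_fact_fac unfolding is_fact_def by blast+

lemma dom_fst_fac: "f \<in> Mor A \<Longrightarrow> Dom A (fst_fac A X Y f) = Dom A f"
  and cod_snd_fac: "f \<in> Mor A \<Longrightarrow> Cod A (snd_fac A X Y f) = Cod A f"
  using dom_comp[OF X_Mor Y_Mor] cod_comp[OF X_Mor Y_Mor]
    fst_fac_in_X snd_fac_in_Y cod_fst_fac snd_fac_comp_fst_fac by metis+

lemma fac_of_comp:
  assumes "e \<in> X" "m \<in> Y" "Cod A e = Dom A m"
  shows "fst_fac A X Y (Comp A m e) = e" "snd_fac A X Y (Comp A m e) = m"
proof -
  have "\<exists>!p. is_fact A X Y (Comp A m e) (fst p) (snd p)"
    using assms strict_fact_system comp_in_Mor[OF X_Mor Y_Mor]
    unfolding strict_fact_system_def by blast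
  moreover have "is_fact A X Y (Comp A m e) (fst (e, m)) (snd (e, m))"
    using assms unfolding is_fact_def by simp
  ultimately have "(THE p. is_fact A X Y (Comp A m e) (fst p) (snd p)) = (e, m)"
    by (rule the1_equality)
  then show "fst_fac A X Y (Comp A m e) = e" "snd_fac A X Y (Comp A m e) = m"
    unfolding fst_fac_def snd_fac_def by simp_all
qed

lemma fac_X:
  assumes "f \<in> X"
  shows "fst_fac A X Y f = f" "snd_fac A X Y f = Idm A (Cod A f)"
  using fac_of_comp[OF assms Idm_in_Y] comp_Idm_left[OF X_Mor[OF assms]]
    cod_in_Obj[OF X_Mor[OF assms]] by simp_all

lemma fac_Y:
  assumes "f \<in> Y"
  shows "fst_fac A X Y f = Idm A (Dom A f)" "snd_fac A X Y f = f"
  using fac_of_comp[OF Idm_in_X assms] comp_Idm_right[OF Y_Mor[OF assms]]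
    dom_in_Obj[OF Y_Mor[OF assms]] by simp_all

lemma fac_comp:
  assumes f: "f \<in> Mor A" and g: "g \<in> Mor A" and fg: "Cod A f = Dom A g"
  defines "k \<equiv> Comp A (fst_fac A X Y g) (snd_fac A X Y f)"
  shows "k \<in> Mor A" "Dom A k = Cod A (fst_fac A X Y f)" "Cod A k = Dom A (snd_fac A X Y g)"
    and "fst_fac A X Y (Comp A g f) = Comp A (fst_fac A X Y k) (fst_fac A X Y f)"
    and "snd_fac A X Y (Comp A g f) = Comp A (snd_fac A X Y g) (snd_fac A X Y k)"
proof -
  let ?e1 = "fst_fac A X Y f" and ?m1 = "snd_fac A X Y f"
  let ?e2 = "fst_fac A X Y g" and ?m2 = "snd_fac A X Y g"
  have e1: "?e1 \<in> X" "?e1 \<in> Mor A" and m1: "?m1 \<in> Y" "?m1 \<in> Mor A"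
    and e2: "?e2 \<in> X" "?e2 \<in> Mor A" and m2: "?m2 \<in> Y" "?m2 \<in> Mor A"
    using f g fst_fac_in_X snd_fac_in_Y X_Mor Y_Mor by blast+
  have m1e2: "Cod A ?m1 = Dom A ?e2"
    using f g fg by (simp add: cod_snd_fac dom_fst_fac)
  show k: "k \<in> Mor A" "Dom A k = Cod A ?e1" "Cod A k = Dom A ?m2"
    unfolding k_def using m1e2 m1 e2 f g by (simp_all add: comp_in_Mor cod_fst_fac)
  let ?ek = "fst_fac A X Y k" and ?mk = "snd_fac A X Y k"
  have ek: "?ek \<in> X" "?ek \<in> Mor A" and mk: "?mk \<in> Y" "?mk \<in> Mor A"
    using k fst_fac_in_X snd_fac_in_Y X_Mor Y_Mor by blast+
  have e1ek: "Cod A ?e1 = Dom A ?ek" and mkm2: "Cod A ?mk = Dom A ?m2"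
    using k by (simp_all add: dom_fst_fac cod_snd_fac)
  have "Comp A g f = Comp A (Comp A ?m2 ?e2) (Comp A ?m1 ?e1)"
    using f g by (simp add: snd_fac_comp_fst_fac)
  also have "\<dots> = Comp A ?m2 (Comp A k ?e1)"
    unfolding k_def using e1 m1 e2 m2 m1e2 f g by (simp add: comp_assoc4 cod_fst_fac)
  also have "\<dots> = Comp A ?m2 (Comp A (Comp A ?mk ?ek) ?e1)"
    using k by (simp add: snd_fac_comp_fst_fac)
  also have "\<dots> = Comp A (Comp A ?m2 ?mk) (Comp A ?ek ?e1)"
    using e1 ek mk m2 e1ek mkm2 k by (simp add: comp_assoc4 cod_fst_fac)
  finally have gf: "Comp A g f = Comp A (Comp A ?m2 ?mk) (Comp A ?ek ?e1)" .
  have "Comp A ?ek ?e1 \<in> X" "Comp A ?m2 ?mk \<in> Y"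
    "Cod A (Comp A ?ek ?e1) = Dom A (Comp A ?m2 ?mk)"
    using e1 ek mk m2 e1ek mkm2 k by (simp_all add: X_comp_closed Y_comp_closed cod_fst_fac)
  from fac_of_comp[OF this] gf
  show "fst_fac A X Y (Comp A g f) = Comp A ?ek ?e1"
    and "snd_fac A X Y (Comp A g f) = Comp A ?m2 ?mk" by simp_all
qed

end

locale variance_category = category A for A :: "('o, 'm) cat" +
  fixes E M :: "'m set"
  assumes variance: "variance A E M"

sublocale variance_category \<subseteq> EM: strict_factorization A E M
  using variance by unfold_locales (simp add: variance_def)

sublocale variance_category \<subseteq> ME: strict_factorization A M E
  using variance by unfold_locales (simp add: variance_def)

context variance_category
begin

lemmas up_e_in_E = EM.fst_fac_in_X[folded up_e_def]
  and up_m_in_M = EM.snd_fac_in_Y[folded up_m_def]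
  and dom_up_e = EM.dom_fst_fac[folded up_e_def]
  and cod_up_m = EM.cod_snd_fac[folded up_m_def]
  and up_fac_E = EM.fac_X[folded up_e_def up_m_def]
  and up_fac_M = EM.fac_Y[folded up_e_def up_m_def]
  and up_comp = EM.fac_comp[folded up_e_def up_m_def]

lemmas lo_m_in_M = ME.fst_fac_in_X[folded lo_m_def]
  and lo_e_in_E = ME.snd_fac_in_Y[folded lo_e_def]
  and dom_lo_m = ME.dom_fst_fac[folded lo_m_def]
  and cod_lo_m = ME.cod_fst_fac[folded lo_m_def lo_e_def]
  and cod_lo_e = ME.cod_snd_fac[folded lo_e_def]
  and lo_e_comp_lo_m = ME.snd_fac_comp_fst_fac[folded lo_m_def lo_e_def]
  and lo_fac_M = ME.fac_X[folded lo_m_def lo_e_def]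
  and lo_fac_E = ME.fac_Y[folded lo_m_def lo_e_def]
  and lo_comp = ME.fac_comp[folded lo_m_def lo_e_def]

lemma f_s_E: "f \<in> E \<Longrightarrow> f_s A E M f = Dom A f"
  and f_t_E: "f \<in> E \<Longrightarrow> f_t A E M f = Cod A f"
  and f_s_M: "f \<in> M \<Longrightarrow> f_s A E M f = Cod A f"
  and f_t_M: "f \<in> M \<Longrightarrow> f_t A E M f = Dom A f"
  unfolding f_s_def f_t_def
  by (simp_all add: up_fac_E lo_fac_E up_fac_M lo_fac_M dom_in_Obj cod_in_Obj EM.X_Mor EM.Y_Mor)

end

definition glued_functor ::
  "('o, 'm) cat \<Rightarrow> 'm set \<Rightarrow> 'm set \<Rightarrow> ('p, 'n) cat \<Rightarrow> ('m \<Rightarrow> 'n) \<Rightarrow> ('m \<Rightarrow> 'n) \<Rightarrow> 'm \<Rightarrow> 'n"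
  where "glued_functor A E M C G H = (\<lambda>f\<in>Mor A. Comp C (G (up_e A E M f)) (H (lo_m A E M f)))"

lemma glued_functor_apply:
  "f \<in> Mor A \<Longrightarrow> glued_functor A E M C G H f = Comp C (G (up_e A E M f)) (H (lo_m A E M f))"
  by (simp add: glued_functor_def)

locale variance_to_category = variance_category A E M + C: category C
  for A :: "('o, 'm) cat" and E M :: "'m set" and C :: "('p, 'n) cat"

context variance_to_category
begin

context
  fixes Fo :: "'o \<Rightarrow> 'p" and Fm :: "'m \<Rightarrow> 'n"
  assumes F: "var_functor A E M C Fo Fm"
begin

lemma Fo_in_Obj: "x \<in> Obj A \<Longrightarrow> Fo x \<in> Obj C"
  and Fm_Idm: "x \<in> Obj A \<Longrightarrow> Fm (Idm A x) = Idm C (Fo x)"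
  and Fm_in_Mor: "f \<in> Mor A \<Longrightarrow> Fm f \<in> Mor C"
  and dom_Fm: "f \<in> Mor A \<Longrightarrow> Dom C (Fm f) = Fo (f_s A E M f)"
  and cod_Fm: "f \<in> Mor A \<Longrightarrow> Cod C (Fm f) = Fo (f_t A E M f)"
  and Fm_comp_f: "f \<in> Mor A \<Longrightarrow> g \<in> Mor A \<Longrightarrow> Cod A f = Dom A g \<Longrightarrow>
        Fm (Comp A g f) =
          Comp C (Fm (up_e A E M (Comp A (up_e A E M g) (up_m A E M f))))
            (Comp C (Fm f) (Fm (lo_m A E M (Comp A (lo_m A E M g) (lo_e A E M f)))))"
  and Fm_comp_g: "f \<in> Mor A \<Longrightarrow> g \<in> Mor A \<Longrightarrow> Cod A f = Dom A g \<Longrightarrow>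
        Fm (Comp A g f) =
          Comp C (Fm (up_m A E M (Comp A (up_e A E M g) (up_m A E M f))))
            (Comp C (Fm g) (Fm (lo_e A E M (Comp A (lo_m A E M g) (lo_e A E M f)))))"
  using F unfolding var_functor_def by blast+

lemma dom_Fm_E: "f \<in> E \<Longrightarrow> Dom C (Fm f) = Fo (Dom A f)"
  and cod_Fm_E: "f \<in> E \<Longrightarrow> Cod C (Fm f) = Fo (Cod A f)"
  and dom_Fm_M: "f \<in> M \<Longrightarrow> Dom C (Fm f) = Fo (Cod A f)"
  and cod_Fm_M: "f \<in> M \<Longrightarrow> Cod C (Fm f) = Fo (Dom A f)"
  by (simp_all add: dom_Fm cod_Fm f_s_E f_t_E f_s_M f_t_M EM.X_Mor EM.Y_Mor)

lemma Fm_comp_E: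
  assumes "f \<in> E" "g \<in> E" "Cod A f = Dom A g"
  shows "Fm (Comp A g f) = Comp C (Fm g) (Fm f)"
  using Fm_comp_f[OF EM.X_Mor EM.X_Mor] assms
  by (simp add: up_fac_E lo_fac_E comp_Idm_right comp_Idm_left EM.X_Mor dom_in_Obj Fm_Idm
      C.comp_Idm_right Fm_in_Mor dom_Fm_E)

lemma Fm_comp_M:
  assumes "f \<in> M" "g \<in> M" "Cod A f = Dom A g"
  shows "Fm (Comp A g f) = Comp C (Fm f) (Fm g)"
  using Fm_comp_g[OF EM.Y_Mor EM.Y_Mor] assms
  by (simp add: up_fac_M lo_fac_M comp_Idm_right comp_Idm_left EM.Y_Mor cod_in_Obj Fm_Idm
      C.comp_Idm_right Fm_in_Mor dom_Fm_M)

lemma Fm_factor: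
  assumes f: "f \<in> Mor A"
  shows "Fm f = Comp C (Fm (up_e A E M f)) (Fm (lo_m A E M f))"
    and "Fm f = Comp C (Fm (up_m A E M f)) (Fm (lo_e A E M f))"
proof -
  let ?m = "lo_m A E M f" and ?e = "lo_e A E M f"
  have m: "?m \<in> M" "?m \<in> Mor A" and e: "?e \<in> E" "?e \<in> Mor A"
    using f lo_m_in_M lo_e_in_E EM.X_Mor EM.Y_Mor by blast+
  have me: "Cod A ?m = Dom A ?e" and x: "Cod A ?m \<in> Obj A"
    using f cod_lo_m cod_in_Obj m(2) by blast+
  have Idm_x: "Idm A (Cod A ?m) \<in> E" "Idm A (Cod A ?m) \<in> M"
    using x EM.Idm_in_X EM.Idm_in_Y by blast+
  note trivial_factors = up_fac_E up_fac_M lo_fac_E lo_fac_M comp_Idm_Idm Fm_Idm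
    C.comp_Idm_right Fm_in_Mor dom_Fm_E dom_Fm_M lo_e_comp_lo_m
  show "Fm f = Comp C (Fm (up_e A E M f)) (Fm (lo_m A E M f))"
    using Fm_comp_f[OF m(2) e(2) me] f m e me x Idm_x by (simp add: trivial_factors)
  show "Fm f = Comp C (Fm (up_m A E M f)) (Fm (lo_e A E M f))"
    using Fm_comp_g[OF m(2) e(2) me] f m e me x Idm_x by (simp add: trivial_factors)
qed

lemma cov_functor_on_restrict: "cov_functor_on A E C Fo (restrict Fm E)"
  unfolding cov_functor_on_def
  by (simp add: Fo_in_Obj Fm_Idm EM.Idm_in_X Fm_in_Mor EM.X_Mor dom_Fm_E cod_Fm_E Fm_comp_E
      EM.X_comp_closed)

lemma contra_functor_on_restrict: "contra_functor_on A M C Fo (restrict Fm M)"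
  unfolding contra_functor_on_def
  by (simp add: Fo_in_Obj Fm_Idm EM.Idm_in_Y Fm_in_Mor EM.Y_Mor dom_Fm_M cod_Fm_M Fm_comp_M
      EM.Y_comp_closed)

lemma compatible_pair_restrict: "compatible_pair A E M C Fo (restrict Fm E) (restrict Fm M)"
  unfolding compatible_pair_def
  using cov_functor_on_restrict contra_functor_on_restrict Fm_factor
  by (simp add: up_e_in_E up_m_in_M lo_m_in_M lo_e_in_E)

end

lemma var_functor_eqI:
  assumes "var_functor A E M C Fo Fm" "var_functor A E M C Fo' Fm'"
    and "\<And>f. f \<in> E \<Longrightarrow> Fm f = Fm' f" "\<And>f. f \<in> M \<Longrightarrow> Fm f = Fm' f"
    and "f \<in> Mor A"
  shows "Fm f = Fm' f"
  using Fm_factor(1)[OF assms(1,5)] Fm_factor(1)[OF assms(2,5)] assms(3-5)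
  by (simp add: up_e_in_E lo_m_in_M)

context
  fixes Fo :: "'o \<Rightarrow> 'p" and G H :: "'m \<Rightarrow> 'n"
  assumes P: "compatible_pair A E M C Fo G H"
begin

lemma G_Idm: "x \<in> Obj A \<Longrightarrow> G (Idm A x) = Idm C (Fo x)"
  and H_Idm: "x \<in> Obj A \<Longrightarrow> H (Idm A x) = Idm C (Fo x)"
  and G_in_Mor: "f \<in> E \<Longrightarrow> G f \<in> Mor C"
  and dom_G: "f \<in> E \<Longrightarrow> Dom C (G f) = Fo (Dom A f)"
  and cod_G: "f \<in> E \<Longrightarrow> Cod C (G f) = Fo (Cod A f)"
  and H_in_Mor: "f \<in> M \<Longrightarrow> H f \<in> Mor C"
  and dom_H: "f \<in> M \<Longrightarrow> Dom C (H f) = Fo (Cod A f)"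
  and cod_H: "f \<in> M \<Longrightarrow> Cod C (H f) = Fo (Dom A f)"
  and G_comp: "f \<in> E \<Longrightarrow> g \<in> E \<Longrightarrow> Cod A f = Dom A g \<Longrightarrow> G (Comp A g f) = Comp C (G g) (G f)"
  and H_comp: "f \<in> M \<Longrightarrow> g \<in> M \<Longrightarrow> Cod A f = Dom A g \<Longrightarrow> H (Comp A g f) = Comp C (H f) (H g)"
  and G_H_compatible: "f \<in> Mor A \<Longrightarrow>
        Comp C (G (up_e A E M f)) (H (lo_m A E M f)) = Comp C (H (up_m A E M f)) (G (lo_e A E M f))"
  using P unfolding compatible_pair_def cov_functor_on_def contra_functor_on_def by blast+

lemma glued_functor_alt: "f \<in> Mor A \<Longrightarrow>
    glued_functor A E M C G H f = Comp C (H (up_m A E M f)) (G (lo_e A E M f))"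
  by (simp add: glued_functor_apply G_H_compatible)

lemma glued_functor_E: "f \<in> E \<Longrightarrow> glued_functor A E M C G H f = G f"
  by (simp add: glued_functor_def EM.X_Mor up_fac_E lo_fac_E dom_in_Obj H_Idm
      C.comp_Idm_right G_in_Mor dom_G)

lemma glued_functor_M: "f \<in> M \<Longrightarrow> glued_functor A E M C G H f = H f"
  by (simp add: glued_functor_def EM.Y_Mor up_fac_M lo_fac_M dom_in_Obj G_Idm
      C.comp_Idm_left H_in_Mor cod_H)

lemma glued_functor_in_Mor: "f \<in> Mor A \<Longrightarrow> glued_functor A E M C G H f \<in> Mor C"
  and dom_glued_functor: "f \<in> Mor A \<Longrightarrow> Dom C (glued_functor A E M C G H f) = Fo (f_s A E M f)"
  and cod_glued_functor: "f \<in> Mor A \<Longrightarrow> Cod C (glued_functor A E M C G H f) = Fo (f_t A E M f)"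
  by (simp_all add: glued_functor_def f_s_def f_t_def C.comp_in_Mor G_in_Mor H_in_Mor
      up_e_in_E lo_m_in_M dom_G cod_G dom_H cod_H dom_up_e dom_lo_m)

lemma glued_functor_Idm: "x \<in> Obj A \<Longrightarrow> glued_functor A E M C G H (Idm A x) = Idm C (Fo x)"
  by (simp add: glued_functor_E EM.Idm_in_X G_Idm)

lemma glued_functor_comp_f:
  assumes f: "f \<in> Mor A" and g: "g \<in> Mor A" and fg: "Cod A f = Dom A g"
  defines "k \<equiv> Comp A (up_e A E M g) (up_m A E M f)"
    and "l \<equiv> Comp A (lo_m A E M g) (lo_e A E M f)"
  shows "glued_functor A E M C G H (Comp A g f) =
      Comp C (glued_functor A E M C G H (up_e A E M k))
        (Comp C (glued_functor A E M C G H f) (glued_functor A E M C G H (lo_m A E M l)))"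
proof -
  let ?F = "glued_functor A E M C G H"
  note U = up_comp[OF f g fg, folded k_def] and L = lo_comp[OF f g fg, folded l_def]
  let ?ek = "up_e A E M k" and ?ef = "up_e A E M f" and ?ml = "lo_m A E M l" and ?mf = "lo_m A E M f"
  have parts: "?ek \<in> E" "?ef \<in> E" "?ml \<in> M" "?mf \<in> M"
    using U(1) L(1) f up_e_in_E lo_m_in_M by blast+
  have composable: "Cod A ?ef = Dom A ?ek" "Cod A ?mf = Dom A ?ml"
    using U(1,2) L(1,2) by (simp_all add: dom_up_e dom_lo_m)
  have "?F (Comp A g f) = Comp C (G (Comp A ?ek ?ef)) (H (Comp A ?ml ?mf))"
    using comp_in_Mor[OF f g fg] U(4) L(4) by (simp add: glued_functor_apply)
  also have "\<dots> = Comp C (Comp C (G ?ek) (G ?ef)) (Comp C (H ?mf) (H ?ml))"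
    using parts composable by (simp add: G_comp H_comp)
  also have "\<dots> = Comp C (G ?ek) (Comp C (Comp C (G ?ef) (H ?mf)) (H ?ml))"
    by (rule C.comp_assoc4)
      (simp_all add: parts composable f G_in_Mor H_in_Mor dom_G cod_G dom_H cod_H dom_up_e dom_lo_m)
  also have "\<dots> = Comp C (?F ?ek) (Comp C (?F f) (?F ?ml))"
    using parts by (simp add: glued_functor_E glued_functor_M glued_functor_apply[OF f])
  finally show ?thesis .
qed

lemma glued_functor_comp_g:
  assumes f: "f \<in> Mor A" and g: "g \<in> Mor A" and fg: "Cod A f = Dom A g"
  defines "k \<equiv> Comp A (up_e A E M g) (up_m A E M f)"
    and "l \<equiv> Comp A (lo_m A E M g) (lo_e A E M f)"
  shows "glued_functor A E M C G H (Comp A g f) =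
      Comp C (glued_functor A E M C G H (up_m A E M k))
        (Comp C (glued_functor A E M C G H g) (glued_functor A E M C G H (lo_e A E M l)))"
proof -
  let ?F = "glued_functor A E M C G H"
  note U = up_comp[OF f g fg, folded k_def] and L = lo_comp[OF f g fg, folded l_def]
  let ?mk = "up_m A E M k" and ?mg = "up_m A E M g" and ?el = "lo_e A E M l" and ?eg = "lo_e A E M g"
  have parts: "?mk \<in> M" "?mg \<in> M" "?el \<in> E" "?eg \<in> E"
    using U(1) L(1) g up_m_in_M lo_e_in_E by blast+
  have composable: "Cod A ?mk = Dom A ?mg" "Cod A ?el = Dom A ?eg"
    using U(1,3) L(1,3) by (simp_all add: cod_up_m cod_lo_e)
  have "?F (Comp A g f) = Comp C (H (Comp A ?mg ?mk)) (G (Comp A ?eg ?el))"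
    using comp_in_Mor[OF f g fg] U(5) L(5) by (simp add: glued_functor_alt)
  also have "\<dots> = Comp C (Comp C (H ?mk) (H ?mg)) (Comp C (G ?eg) (G ?el))"
    using parts composable by (simp add: G_comp H_comp)
  also have "\<dots> = Comp C (H ?mk) (Comp C (Comp C (H ?mg) (G ?eg)) (G ?el))"
    by (rule C.comp_assoc4)
      (simp_all add: parts composable g G_in_Mor H_in_Mor dom_G cod_G dom_H cod_H cod_up_m cod_lo_e)
  also have "\<dots> = Comp C (?F ?mk) (Comp C (?F g) (?F ?el))"
    using parts glued_functor_alt[OF g] by (simp add: glued_functor_E glued_functor_M)
  finally show ?thesis .
qed

lemma var_functor_glued_functor: "var_functor A E M C Fo (glued_functor A E M C G H)"
  unfolding var_functor_def
  using P[unfolded compatible_pair_def cov_functor_on_def] glued_functor_Idm glued_functor_in_Mor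
    dom_glued_functor cod_glued_functor glued_functor_comp_f glued_functor_comp_g
  by blast

end

lemma inj_on_restrict_pair: "inj_on (restrict_pair E M) (var_functors A E M C)"
proof (rule inj_onI, clarsimp simp: var_functors_def restrict_pair_def)
  fix Fo Fm Fm'
  assume F: "var_functor A E M C Fo Fm" and F': "var_functor A E M C Fo Fm'"
    and ext: "Fm \<in> extensional (Mor A)" "Fm' \<in> extensional (Mor A)"
    and on_E: "restrict Fm E = restrict Fm' E" and on_M: "restrict Fm M = restrict Fm' M"
  have "Fm f = Fm' f" if "f \<in> Mor A" for f
    using var_functor_eqI[OF F F' _ _ that] on_E on_M by (metis restrict_apply')
  with ext show "Fm = Fm'"
    by (rule extensionalityI)
qed

lemma restrict_pair_image: "restrict_pair E M ` var_functors A E M C = compatible_pairs A E M C"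
proof
  show "restrict_pair E M ` var_functors A E M C \<subseteq> compatible_pairs A E M C"
    by (auto simp: var_functors_def compatible_pairs_def restrict_pair_def compatible_pair_restrict)
  show "compatible_pairs A E M C \<subseteq> restrict_pair E M ` var_functors A E M C"
  proof (clarsimp simp: compatible_pairs_def)
    fix Fo G H
    assume P: "compatible_pair A E M C Fo G H" and "Fo \<in> extensional (Obj A)"
      and "G \<in> extensional E" "H \<in> extensional M"
    have "(Fo, glued_functor A E M C G H) \<in> var_functors A E M C"
      using var_functor_glued_functor[OF P] \<open>Fo \<in> extensional (Obj A)\<close>
      by (simp add: var_functors_def glued_functor_def)
    moreover have "restrict (glued_functor A E M C G H) E = G"
      using \<open>G \<in> extensional E\<close> glued_functor_E[OF P]
      by (metis restrict_ext extensional_restrict)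
    moreover have "restrict (glued_functor A E M C G H) M = H"
      using \<open>H \<in> extensional M\<close> glued_functor_M[OF P]
      by (metis restrict_ext extensional_restrict)
    ultimately show "(Fo, G, H) \<in> restrict_pair E M ` var_functors A E M C"
      by (intro image_eqI[where x = "(Fo, glued_functor A E M C G H)"]) (simp_all add: restrict_pair_def)
  qed
qed

end

theorem mainTheorem2:
  fixes A :: "('o, 'm) cat" and C :: "('p, 'n) cat" and E M :: "'m set"
  assumes "is_category A" and "is_category C" and "variance A E M"
  shows "(\<forall>Fo Fm. var_functor A E M C Fo Fm \<longrightarrow>
            cov_functor_on A E C Fo (restrict Fm E) \<and>
            contra_functor_on A M C Fo (restrict Fm M) \<and>
            compatible_pair A E M C Fo (restrict Fm E) (restrict Fm M)) \<and>
         bij_betw (restrict_pair E M) (var_functors A E M C) (compatible_pairs A E M C)"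
proof -
  interpret variance_to_category A E M C
    using assms by unfold_locales
  show ?thesis
    using cov_functor_on_restrict contra_functor_on_restrict compatible_pair_restrict
      bij_betw_imageI[OF inj_on_restrict_pair restrict_pair_image]
    by blast
qed

end
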